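(* Let $\tilde h_n(q)=q^{n(n-1)/2}h_n(q^{-1})$ for $n\ge 0$ and $\tilde h(q,s)=\sum_{n\ge0}\tilde h_n(q)s^n$. Then, as formal power series in $s$, $$\tilde h(q,s)=\cfrac{1}{1-\gamma_0 s-\cfrac{\lambda_0 s^2}{1-\gamma_1 s-\cfrac{\lambda_1 s^2}{1-\gamma_2 s-\cdots}}},\qquad \gamma_m=\binom{m+1}{1}_{\!q}^{2},\quad \lambda_m=q\binom{m+2}{2}_{\!q}^{2}\ (m\ge0),$$ i.e. $$\tilde h(q,s)=\cfrac{1}{1-s-\cfrac{qs^2}{1-\binom{2}{1}_q^2 s-\cfrac{q\binom{3}{2}_q^2s^2}{1-\binom{3}{1}_q^2s-\cfrac{q\binom{4}{2}_q^2s^2}{1-\binom{4}{1}_q^2 s-\cdots}}}}.$$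
   Context: Gaussian binomial coefficients: for $m\ge k\ge 0$, $\binom{m}{k}_q=\frac{[m]_q!}{[k]_q!\,[m-k]_q!}$ with $[m]_q!=\prod_{i=1}^m\frac{1-q^i}{1-q}$; set $\binom{m}{k}_q=0$ if $k>m$ or $k<0$. Let $W$ be an $n$-dimensional complex vector space with basis $w_1,\dots,w_n$, and $pr_k:W\to W$ the projection with $pr_k(\sum_i c_iw_i)=\sum_{i\ne k}c_iw_i$. The degenerate flag variety $\mathrm{Fl}^a_n$ is the variety of tuples $(V_1,\dots,V_{n-1})$ of subspaces of $W$ with $\dim V_k=k$ and $pr_{k+1}V_k\subset V_{k+1}$ for $k=1,\dots,n-2$. It admits a cellular decomposition into complex affine cells, so its Poincaré polynomial $P(t)$ involves only even powers of $t$; define $h_n(q)=P(q^{1/2})$, a polynomial of degree $n(n-1)/2$ with $h_0(q)=h_1(q)=1$. It is known (Cerulli Irelli–Feigin–Reineke) that $$h_n(q)=\sum_{f_1,\dots,f_{n-1}\ge 0} q^{\sum_{k=1}^{n-1}(k-f_k)(1-f_k+f_{k+1})}\prod_{k=1}^{n-1}\binom{1+f_{k-1}}{f_k}_{\!q}\prod_{k=1}^{n-1}\binom{1+f_{k+1}}{f_k}_{\!q},$$ with the convention $f_0=f_n=0$. *)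

theory Defs
  imports "HOL-Computational_Algebra.Computational_Algebra"
begin

definition qint :: "nat \<Rightarrow> complex poly" where
  "qint i = (\<Sum>j<i. monom 1 j)"

definition qfact :: "nat \<Rightarrow> complex poly" where
  "qfact m = (\<Prod>i=1..m. qint i)"

text \<open>Gaussian binomial coefficient (exact polynomial division); zero if k > m.\<close>
definition qbinom :: "nat \<Rightarrow> nat \<Rightarrow> complex poly" where
  "qbinom m k = (if k \<le> m then qfact m div (qfact k * qfact (m - k)) else 0)"

text \<open>Admissible index tuples (f_1,...,f_{n-1}); f_0 = f_n = 0 (and f vanishes outside 1..n-1).
  Only tuples with f_k \<le> k give nonzero terms, so the bound f_k \<le> n loses nothing.\<close>
definition ftuples :: "nat \<Rightarrow> (nat \<Rightarrow> nat) set" where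
  "ftuples n = {f. \<forall>k. (k \<in> {1..n-1} \<longrightarrow> f k \<le> n) \<and> (k \<notin> {1..n-1} \<longrightarrow> f k = 0)}"

definition hexp :: "nat \<Rightarrow> (nat \<Rightarrow> nat) \<Rightarrow> int" where
  "hexp n f = (\<Sum>k=1..n-1. (int k - int (f k)) * (1 - int (f k) + int (f (k+1))))"

text \<open>h_n(q) by the Cerulli Irelli--Feigin--Reineke formula. The exponent is nonnegative
  whenever the product of Gaussian binomials is nonzero.\<close>
definition hpoly :: "nat \<Rightarrow> complex poly" where
  "hpoly n = (\<Sum>f\<in>ftuples n. monom 1 (nat (hexp n f)) *
      (\<Prod>k=1..n-1. qbinom (1 + f (k-1)) (f k) * qbinom (1 + f (k+1)) (f k)))"

text \<open>\<tilde>h_n(q) = q^(n(n-1)/2) h_n(1/q): coefficient reversal w.r.t. degree n(n-1)/2.\<close>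
definition htpoly :: "nat \<Rightarrow> complex poly" where
  "htpoly n = Poly (map (\<lambda>i. coeff (hpoly n) (n*(n-1) div 2 - i)) [0..<n*(n-1) div 2 + 1])"

text \<open>Truncations of the J-fraction
  1/(1 - g_m s - l_m s^2/(1 - g_{m+1} s - l_{m+1} s^2/(...))) at depth N (innermost tail 1).\<close>
fun jfrac :: "(nat \<Rightarrow> complex) \<Rightarrow> (nat \<Rightarrow> complex) \<Rightarrow> nat \<Rightarrow> nat \<Rightarrow> complex fps" where
  "jfrac g l m 0 = 1"
| "jfrac g l m (Suc N) =
     inverse (1 - fps_const (g m) * fps_X - fps_const (l m) * fps_X ^ 2 * jfrac g l (Suc m) N)"

end

theory Submission
  imports Defs
begin

(* Proof idea (Flajolet's combinatorics of continued fractions).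
   Give a level step at height m of a Motzkin path the weight g m, an up step from m the weight
   u m and a down step from m the weight d m.  The depth-N truncation of the J-fraction with
   coefficients g m and l m = u m * d (m+1) then has, in every degree n <= N, the total weight
   of Motzkin paths of length n from height 0 to 0 as its coefficient; hence the truncations
   converge to the generating function of these weights.
   In the Cerulli Irelli--Feigin--Reineke sum for h_n only tuples (f_0,...,f_n) whose consecutive
   entries differ by at most one contribute, i.e. Motzkin paths.  Regrouping the product of
   Gaussian binomials by consecutive pairs (f_k, f_(k+1)) and reversing coefficients turns each
   summand into a product of the step weights g m = [m+1]_q^2, u m = q*[m+2 choose 2]_q and
   d m = [m+1 choose 2]_q, because the exponents add up to exactly n(n-1)/2.
   The file develops: (1) weighted Motzkin path sums, (2) the J-fraction expansion
   (jfrac_converges), (3) the needed facts on q-integers and Gaussian binomials, chiefly their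
   palindromicity, (4) coefficient reversal of polynomials, (5) the path form of the reversed
   polynomials (htpoly_motzkin_sum); the theorem combines (2) and (5). *)

section \<open>Weighted Motzkin paths\<close>

definition step_weight :: "(nat \<Rightarrow> 'a) \<Rightarrow> (nat \<Rightarrow> 'a) \<Rightarrow> (nat \<Rightarrow> 'a) \<Rightarrow> nat \<Rightarrow> nat \<Rightarrow> 'a::zero"
  where "step_weight g u d a b =
    (if b = a then g a else if b = Suc a then u a else if a = Suc b then d a else 0)"

text \<open>Total weight of the Motzkin paths of length n from height h down to height 0,
  computed by decomposing along the first step.\<close>
fun motzkin_sum ::
  "(nat \<Rightarrow> 'a) \<Rightarrow> (nat \<Rightarrow> 'a) \<Rightarrow> (nat \<Rightarrow> 'a) \<Rightarrow> nat \<Rightarrow> nat \<Rightarrow> 'a::comm_semiring_1" where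
  "motzkin_sum g u d h 0 = (if h = 0 then 1 else 0)"
| "motzkin_sum g u d h (Suc n) = g h * motzkin_sum g u d h n + u h * motzkin_sum g u d (Suc h) n
     + (if h = 0 then 0 else d h * motzkin_sum g u d (h - 1) n)"

lemma motzkin_sum_too_high: "n < h \<Longrightarrow> motzkin_sum g u d h n = 0"
  by (induction n arbitrary: h) auto

text \<open>Paths from h of length n with h + n \<le> 2N never take a level or up step at height \<ge> N,
  so those weights may be replaced by 0 there.  This is the effect of truncating the J-fraction.\<close>
lemma motzkin_sum_truncate:
  assumes "h + n \<le> 2 * N"
  shows "motzkin_sum (\<lambda>h. if h < N then g h else 0) (\<lambda>h. if h < N then u h else 0) d h n
       = motzkin_sum g u d h n"
  using assms
proof (induction n arbitrary: h)
  case (Suc n)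
  show ?case
  proof (cases "h < N")
    case False
    then have "0 < h" "motzkin_sum g u d h n = 0" "motzkin_sum g u d (Suc h) n = 0"
      using Suc.prems by (auto intro!: motzkin_sum_too_high)
    moreover have "motzkin_sum g u d (h - 1) n = 0" if "h \<noteq> N"
      using False that Suc.prems by (intro motzkin_sum_too_high) auto
    ultimately show ?thesis
      using Suc False by (cases "h = N") auto
  qed (use Suc in auto)
qed simp

abbreviation motzkin_step :: "nat \<Rightarrow> nat \<Rightarrow> bool"
  where "motzkin_step a b \<equiv> b \<le> Suc a \<and> a \<le> Suc b"

lemma motzkin_step_cases:
  assumes "motzkin_step a b"
  obtains (level) "b = a" | (up) "b = Suc a" | (down) c where "a = Suc c" "b = c"
  using assms by (metis le_SucE le_antisym)

definition motzkin_paths :: "nat \<Rightarrow> nat \<Rightarrow> (nat \<Rightarrow> nat) set" where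
  "motzkin_paths n h = {f. f 0 = h \<and> f n = 0 \<and> (\<forall>k>n. f k = 0) \<and>
      (\<forall>k<n. motzkin_step (f k) (f (Suc k)))}"

lemma motzkin_paths_height: "f \<in> motzkin_paths n h \<Longrightarrow> k \<le> n \<Longrightarrow> f k \<le> h + k"
proof (induction k)
  case (Suc k)
  then have "f (Suc k) \<le> Suc (f k)" by (simp add: motzkin_paths_def)
  with Suc show ?case by simp
qed (simp add: motzkin_paths_def)

lemma finite_motzkin_paths: "finite (motzkin_paths n h)"
proof (rule finite_subset)
  show "motzkin_paths n h \<subseteq> {f. \<forall>x. (x \<in> {..n} \<longrightarrow> f x \<in> {..h+n}) \<and> (x \<notin> {..n} \<longrightarrow> f x = 0)}"
  proof
    fix f assume f: "f \<in> motzkin_paths n h"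
    have "f x \<le> h + n" if "x \<le> n" for x using motzkin_paths_height[OF f that] that by simp
    moreover have "f x = 0" if "\<not> x \<le> n" for x using f that by (simp add: motzkin_paths_def)
    ultimately show "f \<in> {f. \<forall>x. (x \<in> {..n} \<longrightarrow> f x \<in> {..h+n}) \<and> (x \<notin> {..n} \<longrightarrow> f x = 0)}"
      by auto
  qed
  show "finite \<dots>" by (rule finite_set_of_finite_funs) auto
qed

lemma motzkin_paths_0: "motzkin_paths 0 h = (if h = 0 then {\<lambda>_. 0} else {})"
  by (auto simp: motzkin_paths_def fun_eq_iff) (metis neq0_conv)

lemma motzkin_paths_Suc:
  "motzkin_paths (Suc n) h =
     (\<lambda>(h', t). case_nat h t) ` (SIGMA h':{h'. motzkin_step h h'}. motzkin_paths n h')"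
proof (intro equalityI subsetI)
  fix f assume f: "f \<in> motzkin_paths (Suc n) h"
  let ?t = "\<lambda>k. f (Suc k)"
  have "f = case_nat h ?t" using f by (auto simp: motzkin_paths_def fun_eq_iff split: nat.split)
  moreover have "motzkin_step h (?t 0)" "?t \<in> motzkin_paths n (?t 0)"
    using f by (auto simp: motzkin_paths_def)
  ultimately show "f \<in> (\<lambda>(h', t). case_nat h t) ` (SIGMA h':{h'. motzkin_step h h'}. motzkin_paths n h')"
    by (auto intro!: image_eqI[where x="(?t 0, ?t)"])
next
  fix f assume "f \<in> (\<lambda>(h', t). case_nat h t) ` (SIGMA h':{h'. motzkin_step h h'}. motzkin_paths n h')"
  then obtain h' t where "motzkin_step h h'" "t \<in> motzkin_paths n h'" and f: "f = case_nat h t"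
    by auto
  then show "f \<in> motzkin_paths (Suc n) h"
    by (auto simp: motzkin_paths_def less_Suc_eq_0_disj split: nat.split)
qed

lemma inj_on_path_cons:
  "inj_on (\<lambda>(h', t). case_nat h t) (SIGMA h':H. motzkin_paths n h')"
proof (rule inj_onI, clarsimp)
  fix a t b s
  assume paths: "t \<in> motzkin_paths n a" "s \<in> motzkin_paths n b"
    and eq: "case_nat h t = case_nat h s"
  have "t = s"
  proof
    fix k show "t k = s k" using fun_cong[OF eq, of "Suc k"] by simp
  qed
  then show "a = b \<and> t = s" using paths by (simp add: motzkin_paths_def)
qed

theorem motzkin_sum_paths:
  "(\<Sum>f\<in>motzkin_paths n h. \<Prod>k<n. step_weight g u d (f k) (f (Suc k))) = motzkin_sum g u d h n"
proof (induction n arbitrary: h)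
  case (Suc n)
  let ?H = "{h'. motzkin_step h h'}"
  have fin: "finite ?H" by (rule finite_subset[of _ "{..Suc h}"]) auto
  have "(\<Sum>f\<in>motzkin_paths (Suc n) h. \<Prod>k<Suc n. step_weight g u d (f k) (f (Suc k)))
      = (\<Sum>(h', t)\<in>(SIGMA h':?H. motzkin_paths n h').
           \<Prod>k<Suc n. step_weight g u d (case_nat h t k) (case_nat h t (Suc k)))"
    unfolding motzkin_paths_Suc by (subst sum.reindex[OF inj_on_path_cons]) (simp add: case_prod_beta)
  also have "\<dots> = (\<Sum>(h', t)\<in>(SIGMA h':?H. motzkin_paths n h').
           step_weight g u d h h' * (\<Prod>k<n. step_weight g u d (t k) (t (Suc k))))"
    by (rule sum.cong) (auto simp del: prod.lessThan_Suc
        simp add: prod.lessThan_Suc_shift motzkin_paths_def)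
  also have "\<dots> = (\<Sum>h'\<in>?H. step_weight g u d h h' * motzkin_sum g u d h' n)"
    by (subst sum.Sigma[symmetric])
      (auto simp: fin finite_motzkin_paths sum_distrib_left[symmetric] Suc.IH)
  also have "\<dots> = motzkin_sum g u d h (Suc n)"
  proof (cases h)
    case 0
    then have "?H = {0, 1}" by auto
    then show ?thesis using 0 by (simp add: step_weight_def)
  next
    case (Suc h')
    then have "?H = insert h (insert (Suc h) {h'})" by auto
    then show ?thesis using Suc by (simp add: step_weight_def add.assoc)
  qed
  finally show ?case .
qed (simp add: motzkin_paths_0)

lemma poly_motzkin_sum:
  "poly (motzkin_sum g u d h n) x =
     motzkin_sum (\<lambda>m. poly (g m) x) (\<lambda>m. poly (u m) x) (\<lambda>m. poly (d m) x) h n"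
  by (induction n arbitrary: h) auto

section \<open>The J-fraction as a generating function of Motzkin paths\<close>

lemma jfrac_Suc_inverse:
  "jfrac g l m (Suc N) * (1 - fps_const (g m) * fps_X - fps_const (l m) * fps_X ^ 2 * jfrac g l (Suc m) N) = 1"
  by (simp del: jfrac.simps(1) add: inverse_mult_eq_1)

context
  fixes g u d :: "nat \<Rightarrow> complex" and N :: nat
begin

definition jfrac_tail :: "nat \<Rightarrow> complex fps" where
  "jfrac_tail m = jfrac g (\<lambda>m. u m * d (Suc m)) m (N - m)"

text \<open>The generating function of paths from height h down to 0 in the truncated J-fraction:
  d_1 \<dots> d_h X^h times the tails at levels 0, \<dots>, h.\<close>
definition descent_gf :: "nat \<Rightarrow> complex fps" where
  "descent_gf h = fps_const (\<Prod>i\<in>{1..h}. d i) * fps_X ^ h * (\<Prod>i\<le>h. jfrac_tail i)"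

lemma jfrac_tail_last: "jfrac_tail N = 1"
  by (simp add: jfrac_tail_def)

lemma jfrac_tail_inverse:
  assumes "h < N"
  shows "jfrac_tail h *
    (1 - fps_const (g h) * fps_X - fps_const (u h * d (Suc h)) * fps_X ^ 2 * jfrac_tail (Suc h)) = 1"
proof -
  have "N - h = Suc (N - Suc h)" using assms by simp
  then show ?thesis
    unfolding jfrac_tail_def using jfrac_Suc_inverse[of g _ h "N - Suc h"] by simp
qed

text \<open>A path from h > 0 to 0 starts with a first descent from h to h-1.\<close>
lemma descent_gf_split:
  "descent_gf h = (if h = 0 then 1 else fps_const (d h) * fps_X * descent_gf (h - 1)) * jfrac_tail h"
proof (cases h)
  case (Suc h')
  have "(\<Prod>i\<in>{1..Suc h'}. d i) = d (Suc h') * (\<Prod>i\<in>{1..h'}. d i)"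
    by (simp add: prod.nat_ivl_Suc' mult.commute)
  then show ?thesis
    using Suc by (simp add: descent_gf_def fps_const_mult[symmetric] mult_ac del: fps_const_mult)
qed (simp add: descent_gf_def)

lemma descent_gf_first_step:
  assumes "h \<le> N"
  shows "descent_gf h = (if h = 0 then 1 else 0) + fps_X *
      (fps_const (if h < N then g h else 0) * descent_gf h
     + fps_const (if h < N then u h else 0) * descent_gf (Suc h)
     + (if h = 0 then 0 else fps_const (d h) * descent_gf (h - 1)))"
proof -
  define P where "P = (if h = 0 then 1 else fps_const (d h) * fps_X * descent_gf (h - 1))"
  have split: "descent_gf h = P * jfrac_tail h"
    unfolding P_def by (rule descent_gf_split)
  show ?thesis
  proof (cases "h < N")
    case True
    have suc: "descent_gf (Suc h) = fps_const (d (Suc h)) * fps_X * descent_gf h * jfrac_tail (Suc h)"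
      using descent_gf_split[of "Suc h"] by simp
    have "descent_gf h - fps_X * fps_const (g h) * descent_gf h - fps_X * fps_const (u h) * descent_gf (Suc h)
        = P * (jfrac_tail h * (1 - fps_const (g h) * fps_X
                 - fps_const (u h * d (Suc h)) * fps_X ^ 2 * jfrac_tail (Suc h)))"
      unfolding suc split by (simp add: algebra_simps power2_eq_square fps_const_mult)
    also have "\<dots> = P" using jfrac_tail_inverse[OF True] by simp
    finally show ?thesis
      using True by (auto simp: P_def algebra_simps)
  next
    case False
    then show ?thesis
      using assms split jfrac_tail_last by (simp add: P_def)
  qed
qed

text \<open>Comparing coefficients in the first-step decomposition reproduces the recursion of
  motzkin_sum, with weights cut off at level N.\<close>
lemma coeff_descent_gf:
  "h \<le> N \<Longrightarrow> descent_gf h $ n =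
     motzkin_sum (\<lambda>h. if h < N then g h else 0) (\<lambda>h. if h < N then u h else 0) d h n"
proof (induction n arbitrary: h)
  case 0
  show ?case by (subst descent_gf_first_step[OF 0]) simp
next
  case (Suc n)
  let ?S = "motzkin_sum (\<lambda>h. if h < N then g h else 0) (\<lambda>h. if h < N then u h else 0) d"
  have up: "(if h < N then u h else 0) * descent_gf (Suc h) $ n = (if h < N then u h else 0) * ?S (Suc h) n"
    using Suc by (cases "h < N") auto
  show ?case
    by (subst descent_gf_first_step[OF Suc.prems])
      (use Suc.prems in \<open>simp add: up Suc.IH[OF Suc.prems] Suc.IH[of "h - Suc 0"]\<close>)
qed

end

theorem jfrac_converges:
  "(\<lambda>N. jfrac g (\<lambda>m. u m * d (Suc m)) 0 N) \<longlonglongrightarrow> Abs_fps (motzkin_sum g u d 0)"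
proof (rule tendsto_fpsI)
  fix n
  show "\<forall>\<^sub>F N in sequentially. jfrac g (\<lambda>m. u m * d (Suc m)) 0 N $ n = Abs_fps (motzkin_sum g u d 0) $ n"
  proof (rule eventually_sequentiallyI)
    fix N assume "n \<le> N"
    have "jfrac g (\<lambda>m. u m * d (Suc m)) 0 N = descent_gf g u d N 0"
      by (simp add: descent_gf_def jfrac_tail_def)
    then have "jfrac g (\<lambda>m. u m * d (Suc m)) 0 N $ n
        = motzkin_sum (\<lambda>h. if h < N then g h else 0) (\<lambda>h. if h < N then u h else 0) d 0 n"
      by (simp add: coeff_descent_gf)
    also have "\<dots> = motzkin_sum g u d 0 n" using \<open>n \<le> N\<close> by (intro motzkin_sum_truncate) simp
    finally show "jfrac g (\<lambda>m. u m * d (Suc m)) 0 N $ n = Abs_fps (motzkin_sum g u d 0) $ n" by simp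
  qed
qed

section \<open>q-integers and Gaussian binomial coefficients\<close>

lemma poly_qint: "poly (qint m) x = (\<Sum>j<m. x ^ j)"
  by (simp add: qint_def poly_sum poly_monom)

lemma degree_qint: "degree (qint m) \<le> m - 1"
  unfolding qint_def by (rule degree_sum_le) (auto intro: order.trans[OF degree_monom_le])

lemma qint_nonzero: "0 < m \<Longrightarrow> qint m \<noteq> 0"
proof
  assume "0 < m" "qint m = 0"
  moreover have "poly (qint m) 0 = 1" if "0 < m"
    using that by (cases m) (simp_all add: poly_qint sum.lessThan_Suc_shift del: sum.lessThan_Suc)
  ultimately show False by simp
qed

lemma qint_reflect:
  assumes "x \<noteq> 0"
  shows "x ^ m * poly (qint (Suc m)) (inverse x) = poly (qint (Suc m)) x"
proof -
  have "x ^ m * poly (qint (Suc m)) (inverse x) = (\<Sum>j<Suc m. x ^ m * inverse x ^ j)"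
    by (simp only: poly_qint sum_distrib_left)
  also have "\<dots> = (\<Sum>j<Suc m. x ^ (Suc m - Suc j))"
    by (rule sum.cong) (auto simp: power_diff assms field_simps)
  also have "\<dots> = (\<Sum>j<Suc m. x ^ j)" by (rule sum.nat_diff_reindex)
  finally show ?thesis by (simp add: poly_qint)
qed

lemma qint_2: "qint 2 = [:1, 1:]"
  by (simp add: qint_def numeral_2_eq_2 monom_altdef one_pCons)

text \<open>[m]_q vanishes at q = -1 for even m; as one of two consecutive integers is even,
  [2]_q = 1 + q divides [a+1]_q [a+2]_q.\<close>
lemma poly_qint_even_minus_one:
  assumes "even m"
  shows "poly (qint m) (-1) = 0"
proof -
  obtain k where "m = 2 * k" using assms by blast
  then show ?thesis by (induction k arbitrary: m) (simp_all add: poly_qint)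
qed

lemma qint_2_dvd: "qint 2 dvd qint (Suc a) * qint (Suc (Suc a))"
proof -
  have "poly (qint (Suc a) * qint (Suc (Suc a))) (-1) = 0"
    by (cases "even a") (simp_all add: poly_qint_even_minus_one)
  then have "[:- (- 1), 1:] dvd qint (Suc a) * qint (Suc (Suc a))"
    by (rule poly_eq_0_iff_dvd[THEN iffD1])
  then show ?thesis by (simp add: qint_2)
qed

lemma qfact_0: "qfact 0 = 1"
  by (simp add: qfact_def)

lemma qfact_Suc: "qfact (Suc m) = qfact m * qint (Suc m)"
  by (simp add: qfact_def prod.nat_ivl_Suc')

lemma qfact_nonzero: "qfact m \<noteq> 0"
  by (induction m) (auto simp: qfact_0 qfact_Suc qint_nonzero)

lemma qbinom_0: "qbinom m 0 = 1"
  by (simp add: qbinom_def qfact_0 qfact_nonzero)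

lemma qbinom_diag: "qbinom m m = 1"
  by (simp add: qbinom_def qfact_0 qfact_nonzero)

lemma qbinom_above: "m < k \<Longrightarrow> qbinom m k = 0"
  by (simp add: qbinom_def)

lemma qbinom_symmetric: "k \<le> m \<Longrightarrow> qbinom m (m - k) = qbinom m k"
  by (simp add: qbinom_def mult.commute)

lemma qbinom_1: "qbinom (Suc a) (Suc 0) = qint (Suc a)"
proof -
  have "qfact 1 = 1" by (simp add: qfact_def qint_def)
  then show ?thesis by (simp add: qbinom_def qfact_Suc qfact_nonzero)
qed

lemma qbinom_Suc_pred: "qbinom (Suc a) a = qint (Suc a)"
  using qbinom_symmetric[of 1 "Suc a"] qbinom_1[of a] by simp

lemma qbinom_Suc_Suc_pred: "qbinom (Suc (Suc a)) a = qbinom (Suc (Suc a)) 2"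
  using qbinom_symmetric[of 2 "Suc (Suc a)"] by simp

lemma qbinom_2_mult: "qint 2 * qbinom (Suc (Suc a)) 2 = qint (Suc a) * qint (Suc (Suc a))"
proof -
  have "qfact 2 = qint 2" by (simp add: numeral_2_eq_2 qfact_def qint_def)
  then have "qbinom (Suc (Suc a)) 2 = (qfact a * (qint (Suc a) * qint (Suc (Suc a)))) div (qfact a * qint 2)"
    by (simp add: qbinom_def qfact_Suc mult_ac)
  also have "\<dots> = qint (Suc a) * qint (Suc (Suc a)) div qint 2"
    by (rule div_mult_mult1) (rule qfact_nonzero)
  finally show ?thesis by (simp add: qint_2_dvd)
qed

lemma degree_qbinom_2: "degree (qbinom (Suc (Suc a)) 2) \<le> 2 * a"
proof -
  have nonzero: "qbinom (Suc (Suc a)) 2 \<noteq> 0"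
    using qbinom_2_mult[of a] qint_nonzero[of "Suc a"] qint_nonzero[of "Suc (Suc a)"] by auto
  have "degree (qint 2) = 1" by (simp add: qint_2)
  then have "1 + degree (qbinom (Suc (Suc a)) 2) = degree (qint 2 * qbinom (Suc (Suc a)) 2)"
    using nonzero qint_nonzero[of 2] by (simp add: degree_mult_eq)
  also have "\<dots> \<le> degree (qint (Suc a)) + degree (qint (Suc (Suc a)))"
    unfolding qbinom_2_mult by (rule degree_mult_le)
  also have "\<dots> \<le> a + Suc a" using degree_qint[of "Suc a"] degree_qint[of "Suc (Suc a)"] by simp
  finally show ?thesis by simp
qed

text \<open>[a+2 choose 2]_q is palindromic of degree 2a (away from the root q = -1 of [2]_q
  that we divide by).\<close>
lemma qbinom_2_reflect:
  assumes "x \<noteq> 0" "x \<noteq> -1"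
  shows "x ^ (2 * a) * poly (qbinom (Suc (Suc a)) 2) (inverse x) = poly (qbinom (Suc (Suc a)) 2) x"
proof -
  have prod: "poly (qbinom (Suc (Suc a)) 2) y * (1 + y) = poly (qint (Suc a)) y * poly (qint (Suc (Suc a))) y"
    for y using arg_cong[OF qbinom_2_mult[of a], of "\<lambda>p. poly p y"] by (simp add: qint_2 algebra_simps)
  have "x ^ (2 * a) * poly (qbinom (Suc (Suc a)) 2) (inverse x) * (1 + x)
      = x ^ (2 * a + 1) * (poly (qbinom (Suc (Suc a)) 2) (inverse x) * (1 + inverse x))"
    using assms(1) by (simp add: field_simps)
  also have "\<dots> = (x ^ a * poly (qint (Suc a)) (inverse x)) * (x ^ Suc a * poly (qint (Suc (Suc a))) (inverse x))"
    unfolding prod by (simp add: power_add mult_2 mult_2_right mult_ac)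
  also have "\<dots> = poly (qbinom (Suc (Suc a)) 2) x * (1 + x)"
    by (simp only: qint_reflect[OF assms(1)] prod)
  finally show ?thesis
    using assms(2) by (metis add_eq_0_iff mult_right_cancel neg_equal_iff_equal add.commute)
qed

section \<open>Reversal of polynomials\<close>

lemma poly_as_sum_upto:
  fixes p :: "'a::comm_semiring_1 poly"
  assumes "degree p \<le> M"
  shows "poly p x = (\<Sum>i<Suc M. coeff p i * x ^ i)"
proof -
  have "poly p x = (\<Sum>i\<le>degree p. coeff p i * x ^ i)" by (rule poly_altdef)
  also have "\<dots> = (\<Sum>i\<le>M. coeff p i * x ^ i)"
    using assms by (intro sum.mono_neutral_left) (auto simp: coeff_eq_0)
  finally show ?thesis by (simp add: lessThan_Suc_atMost)
qed

lemma poly_reversed_coeffs: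
  fixes p :: "'a::field poly"
  assumes "degree p \<le> D" "x \<noteq> 0"
  shows "poly (Poly (map (\<lambda>i. coeff p (D - i)) [0..<D+1])) x = x ^ D * poly p (inverse x)"
proof -
  let ?L = "map (\<lambda>i. coeff p (D - i)) [0..<D+1]"
  have "degree (Poly ?L) \<le> D + 1" using degree_Poly[of ?L] by simp
  then have "poly (Poly ?L) x = (\<Sum>i<Suc (D+1). coeff (Poly ?L) i * x ^ i)" by (rule poly_as_sum_upto)
  also have "\<dots> = (\<Sum>i<Suc D. coeff p (D - i) * x ^ i)"
    by (simp add: nth_default_def del: upt_Suc)
  also have "\<dots> = (\<Sum>i<Suc D. coeff p (Suc D - Suc i) * x ^ (Suc D - Suc (Suc D - Suc i)))"
    by (rule sum.cong) auto
  also have "\<dots> = (\<Sum>i<Suc D. coeff p i * x ^ (D - i))"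
    by (subst sum.nat_diff_reindex[where g = "\<lambda>j. coeff p j * x ^ (Suc D - Suc j)"]) simp
  also have "\<dots> = (\<Sum>i<Suc D. x ^ D * (coeff p i * inverse x ^ i))"
    by (rule sum.cong) (auto simp: power_diff assms(2) field_simps)
  also have "\<dots> = x ^ D * poly p (inverse x)"
    by (simp only: poly_as_sum_upto[OF assms(1)] sum_distrib_left)
  finally show ?thesis .
qed

lemma poly_eq_cofinite:
  fixes p r :: "'a::{idom,ring_char_0} poly"
  assumes "finite S" and agree: "\<And>x. x \<notin> S \<Longrightarrow> poly p x = poly r x"
  shows "p = r"
proof (rule ccontr)
  assume "p \<noteq> r"
  then have "finite {x. poly (p - r) x = 0}" by (intro poly_roots_finite) simp
  moreover have "UNIV - S \<subseteq> {x. poly (p - r) x = 0}" using agree by auto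
  ultimately have "finite (UNIV :: 'a set)" using assms(1) by (metis finite_Diff2 finite_subset)
  then show False using infinite_UNIV_char_0 by blast
qed

section \<open>The reversed CFR polynomial as a sum over Motzkin paths\<close>

text \<open>The factor of the CFR product attached to the consecutive entries a = f_k, b = f_(k+1).\<close>
definition cfr_factor :: "nat \<Rightarrow> nat \<Rightarrow> complex poly" where
  "cfr_factor a b = qbinom (Suc a) b * qbinom (Suc b) a"

text \<open>The degree with respect to which cfr_factor a b is reversed; it bounds its degree.\<close>
definition reversal_degree :: "nat \<Rightarrow> nat \<Rightarrow> nat" where
  "reversal_degree a b = 2 * min a b + (if b = Suc a then 1 else 0)"

definition level_weight :: "nat \<Rightarrow> complex poly" where
  "level_weight m = qbinom (m + 1) 1 ^ 2"

definition up_weight :: "nat \<Rightarrow> complex poly" where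
  "up_weight m = [:0, 1:] * qbinom (m + 2) 2"

definition down_weight :: "nat \<Rightarrow> complex poly" where
  "down_weight m = qbinom (m + 1) 2"

lemma cfr_factor_non_step: "\<not> motzkin_step a b \<Longrightarrow> cfr_factor a b = 0"
  by (auto simp: cfr_factor_def qbinom_above)

lemma degree_cfr_factor: "degree (cfr_factor a b) \<le> reversal_degree a b"
proof (cases "motzkin_step a b")
  case True
  then show ?thesis
  proof (cases rule: motzkin_step_cases)
    case level
    have "degree (qint (Suc a) * qint (Suc a)) \<le> a + a"
      using degree_qint[of "Suc a"] degree_mult_le[of "qint (Suc a)" "qint (Suc a)"] by simp
    then show ?thesis using level by (simp add: cfr_factor_def reversal_degree_def qbinom_Suc_pred)
  next
    case up
    then show ?thesis using degree_qbinom_2[of a]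
      by (simp add: cfr_factor_def reversal_degree_def qbinom_diag qbinom_Suc_Suc_pred)
  next
    case (down c)
    then show ?thesis using degree_qbinom_2[of c]
      by (simp add: cfr_factor_def reversal_degree_def qbinom_diag qbinom_Suc_Suc_pred)
  qed
qed (simp add: cfr_factor_non_step)

lemma cfr_factor_reflect:
  assumes "motzkin_step a b" "x \<noteq> 0" "x \<noteq> -1"
  shows "x ^ reversal_degree a b * poly (cfr_factor a b) (inverse x)
       = poly (step_weight level_weight up_weight down_weight a b) x"
  using assms(1)
proof (cases rule: motzkin_step_cases)
  case level
  then have "x ^ reversal_degree a b * poly (cfr_factor a b) (inverse x)
      = (x ^ a * poly (qint (Suc a)) (inverse x)) ^ 2"
    by (simp add: reversal_degree_def cfr_factor_def qbinom_Suc_pred power2_eq_square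
        power_add mult_2 mult_2_right mult_ac)
  then show ?thesis
    using level by (simp add: qint_reflect[OF assms(2)] step_weight_def level_weight_def qbinom_1)
next
  case up
  then have "x ^ reversal_degree a b * poly (cfr_factor a b) (inverse x)
      = x * (x ^ (2 * a) * poly (qbinom (Suc (Suc a)) 2) (inverse x))"
    by (simp add: reversal_degree_def cfr_factor_def qbinom_diag qbinom_Suc_Suc_pred mult_ac)
  then show ?thesis
    using up by (simp add: qbinom_2_reflect[OF assms(2,3)] step_weight_def up_weight_def)
next
  case (down c)
  then have "x ^ reversal_degree a b * poly (cfr_factor a b) (inverse x)
      = x ^ (2 * c) * poly (qbinom (Suc (Suc c)) 2) (inverse x)"
    by (simp add: reversal_degree_def cfr_factor_def qbinom_diag qbinom_Suc_Suc_pred)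
  then show ?thesis
    using down by (simp add: qbinom_2_reflect[OF assms(2,3)] step_weight_def down_weight_def)
qed

lemma ftuples_boundary:
  assumes "f \<in> ftuples n"
  shows "f 0 = 0" "f n = 0" "\<And>k. n < k \<Longrightarrow> f k = 0"
proof -
  have zero: "\<And>k. k \<notin> {1..n-1} \<Longrightarrow> f k = 0" using assms by (simp add: ftuples_def)
  show "f 0 = 0" by (rule zero) simp
  show "f n = 0" by (rule zero) auto
  show "\<And>k. n < k \<Longrightarrow> f k = 0" by (rule zero) simp
qed

lemma finite_ftuples: "finite (ftuples n)"
proof -
  have "ftuples n = {f. \<forall>x. (x \<in> {1..n-1} \<longrightarrow> f x \<in> {..n}) \<and> (x \<notin> {1..n-1} \<longrightarrow> f x = 0)}"
    by (simp add: ftuples_def)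
  also have "finite \<dots>" by (rule finite_set_of_finite_funs) auto
  finally show ?thesis .
qed

lemma motzkin_paths_ftuples: "motzkin_paths n 0 \<subseteq> ftuples n"
proof
  fix f assume f: "f \<in> motzkin_paths n 0"
  have bound: "f k \<le> n" if "k \<le> n" for k using motzkin_paths_height[OF f that] that by simp
  have zero: "f k = 0" if "k = 0 \<or> k = n \<or> n < k" for k
    using that f by (auto simp: motzkin_paths_def)
  show "f \<in> ftuples n"
    unfolding ftuples_def
  proof (intro CollectI allI conjI impI)
    fix k
    show "f k \<le> n" if "k \<in> {1..n-1}" using that by (intro bound) auto
    show "f k = 0" if "k \<notin> {1..n-1}" using that by (intro zero) auto
  qed
qed

lemma ftuples_non_path:
  assumes "f \<in> ftuples n" "f \<notin> motzkin_paths n 0"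
  shows "\<exists>k<n. \<not> motzkin_step (f k) (f (Suc k))"
proof (rule ccontr)
  assume "\<not> ?thesis"
  then have "\<forall>k<n. motzkin_step (f k) (f (Suc k))" by blast
  then have "f \<in> motzkin_paths n 0"
    using ftuples_boundary[OF assms(1)] unfolding motzkin_paths_def by blast
  with assms(2) show False by simp
qed

text \<open>Grouping the CFR product by consecutive pairs; the boundary factors are 1
  because f_0 = f_n = 0.\<close>
lemma cfr_product_regroup:
  assumes "f 0 = 0" "f n = 0"
  shows "(\<Prod>k=1..n-1. qbinom (1 + f (k-1)) (f k) * qbinom (1 + f (k+1)) (f k))
       = (\<Prod>k<n. cfr_factor (f k) (f (Suc k)))"
proof (cases n)
  case (Suc m)
  have "(\<Prod>k=1..n-1. qbinom (1 + f (k-1)) (f k) * qbinom (1 + f (k+1)) (f k))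
     = (\<Prod>k<m. qbinom (Suc (f k)) (f (Suc k))) * (\<Prod>k<m. qbinom (Suc (f (Suc (Suc k)))) (f (Suc k)))"
    using Suc by (simp add: prod.atLeast1_atMost_eq prod.distrib)
  also have "\<dots> = (\<Prod>k<Suc m. qbinom (Suc (f k)) (f (Suc k))) * (\<Prod>k<Suc m. qbinom (Suc (f (Suc k))) (f k))"
  proof -
    have "(\<Prod>k<Suc m. qbinom (Suc (f k)) (f (Suc k))) = (\<Prod>k<m. qbinom (Suc (f k)) (f (Suc k)))"
      using assms Suc by (simp add: qbinom_0)
    moreover have "(\<Prod>k<Suc m. qbinom (Suc (f (Suc k))) (f k))
        = (\<Prod>k<m. qbinom (Suc (f (Suc (Suc k)))) (f (Suc k)))"
      by (simp only: prod.lessThan_Suc_shift) (simp add: assms qbinom_0)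
    ultimately show ?thesis by simp
  qed
  also have "\<dots> = (\<Prod>k<n. cfr_factor (f k) (f (Suc k)))"
    using Suc by (simp add: cfr_factor_def prod.distrib)
  finally show ?thesis .
qed simp

lemma hexp_as_sum:
  assumes "f 0 = 0"
  shows "hexp n f = (\<Sum>k<n. (int k - int (f k)) * (1 - int (f k) + int (f (Suc k))))"
proof (cases n)
  case (Suc m)
  then show ?thesis using assms
    by (simp add: hexp_def sum.atLeast1_atMost_eq sum.lessThan_Suc_shift[where n=m] del: sum.lessThan_Suc)
qed (simp add: hexp_def)

text \<open>Per step of a path, the CFR exponent plus the reversal degree equals 2k up to a
  telescoping term, with potential 2 k a - a (a - 1) at time k and height a.\<close>
lemma exponent_step:
  assumes "motzkin_step a b"
  shows "2 * ((int k - int a) * (1 - int a + int b) + int (reversal_degree a b))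
       = 2 * int k + ((2 * int (Suc k) * int b - int b * (int b - 1)) - (2 * int k * int a - int a * (int a - 1)))"
  using assms by (cases rule: motzkin_step_cases) (simp_all add: reversal_degree_def algebra_simps)

text \<open>The CFR exponent of a path from 0 is nonnegative, as f_k \<le> k and f_k \<le> f_(k+1) + 1.\<close>
lemma hexp_nonneg:
  assumes f: "f \<in> motzkin_paths n 0"
  shows "0 \<le> hexp n f"
proof -
  have f0: "f 0 = 0" and steps: "\<And>k. k < n \<Longrightarrow> motzkin_step (f k) (f (Suc k))"
    using f by (auto simp: motzkin_paths_def)
  show ?thesis
    unfolding hexp_as_sum[of f n, OF f0]
  proof (rule sum_nonneg)
    fix k assume "k \<in> {..<n}"
    then have "f k \<le> k" "f k \<le> Suc (f (Suc k))" using motzkin_paths_height[OF f, of k] steps by auto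
    then show "0 \<le> (int k - int (f k)) * (1 - int (f k) + int (f (Suc k)))" by simp
  qed
qed

text \<open>Summing exponent_step along a path from 0 to 0: the potential telescopes away.\<close>
lemma path_exponent_identity:
  assumes f: "f \<in> motzkin_paths n 0"
  shows "2 * hexp n f + 2 * int (\<Sum>k<n. reversal_degree (f k) (f (Suc k))) = int n * (int n - 1)"
proof -
  have f0: "f 0 = 0" and fn: "f n = 0" and steps: "\<And>k. k < n \<Longrightarrow> motzkin_step (f k) (f (Suc k))"
    using f by (auto simp: motzkin_paths_def)
  define \<Phi> where "\<Phi> k = 2 * int k * int (f k) - int (f k) * (int (f k) - 1)" for k
  have step: "2 * ((int k - int (f k)) * (1 - int (f k) + int (f (Suc k)))
                 + int (reversal_degree (f k) (f (Suc k)))) = 2 * int k + (\<Phi> (Suc k) - \<Phi> k)"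
    if "k < n" for k
    unfolding \<Phi>_def by (rule exponent_step[OF steps[OF that]])
  have gauss: "(\<Sum>k<m. 2 * int k) = int m * (int m - 1)" for m
    by (induction m) (simp_all add: algebra_simps)
  have "2 * hexp n f + 2 * int (\<Sum>k<n. reversal_degree (f k) (f (Suc k)))
      = (\<Sum>k<n. 2 * ((int k - int (f k)) * (1 - int (f k) + int (f (Suc k)))
                      + int (reversal_degree (f k) (f (Suc k)))))"
    by (simp add: hexp_as_sum[of f n, OF f0] sum_distrib_left sum.distrib)
  also have "\<dots> = (\<Sum>k<n. 2 * int k) + (\<Sum>k<n. \<Phi> (Suc k) - \<Phi> k)"
    unfolding sum.distrib[symmetric] by (rule sum.cong[OF refl], rule step) simp
  also have "\<dots> = int n * (int n - 1)"
    using gauss sum_lessThan_telescope[of \<Phi> n] by (simp add: \<Phi>_def f0 fn)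
  finally show ?thesis .
qed

lemma path_exponents:
  assumes f: "f \<in> motzkin_paths n 0"
  shows "nat (hexp n f) + (\<Sum>k<n. reversal_degree (f k) (f (Suc k))) = n * (n - 1) div 2"
proof -
  have "int n * (int n - 1) = int (n * (n - 1))" by (cases n) (simp_all add: algebra_simps)
  then have "int (2 * (nat (hexp n f) + (\<Sum>k<n. reversal_degree (f k) (f (Suc k))))) = int (n * (n - 1))"
    using path_exponent_identity[OF f] hexp_nonneg[OF f] by simp
  then have "2 * (nat (hexp n f) + (\<Sum>k<n. reversal_degree (f k) (f (Suc k)))) = n * (n - 1)"
    by (simp only: of_nat_eq_iff)
  then show ?thesis by simp
qed

definition cfr_summand :: "nat \<Rightarrow> (nat \<Rightarrow> nat) \<Rightarrow> complex poly" where
  "cfr_summand n f = monom 1 (nat (hexp n f)) * (\<Prod>k<n. cfr_factor (f k) (f (Suc k)))"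

lemma hpoly_paths: "hpoly n = (\<Sum>f\<in>motzkin_paths n 0. cfr_summand n f)"
proof -
  have "hpoly n = (\<Sum>f\<in>ftuples n. cfr_summand n f)"
    unfolding hpoly_def cfr_summand_def
    by (rule sum.cong[OF refl]) (simp only: cfr_product_regroup[OF ftuples_boundary(1,2)])
  also have "\<dots> = (\<Sum>f\<in>motzkin_paths n 0. cfr_summand n f)"
  proof (rule sum.mono_neutral_right[OF finite_ftuples motzkin_paths_ftuples], rule ballI)
    fix f assume "f \<in> ftuples n - motzkin_paths n 0"
    then obtain k where "k < n" "\<not> motzkin_step (f k) (f (Suc k))"
      using ftuples_non_path by blast
    then show "cfr_summand n f = 0"
      unfolding cfr_summand_def by (auto intro!: prod_zero bexI[of _ k] cfr_factor_non_step)
  qed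
  finally show ?thesis .
qed

lemma degree_cfr_summand:
  assumes "f \<in> motzkin_paths n 0"
  shows "degree (cfr_summand n f) \<le> n * (n - 1) div 2"
proof -
  have "degree (cfr_summand n f)
      \<le> degree (monom (1::complex) (nat (hexp n f))) + degree (\<Prod>k<n. cfr_factor (f k) (f (Suc k)))"
    unfolding cfr_summand_def by (rule degree_mult_le)
  also have "\<dots> \<le> nat (hexp n f) + (\<Sum>k<n. reversal_degree (f k) (f (Suc k)))"
  proof (rule add_mono)
    have "degree (\<Prod>k<n. cfr_factor (f k) (f (Suc k))) \<le> (\<Sum>k<n. degree (cfr_factor (f k) (f (Suc k))))"
      using degree_prod_sum_le[of "{..<n}" "\<lambda>k. cfr_factor (f k) (f (Suc k))"] by (simp add: o_def)
    also have "\<dots> \<le> (\<Sum>k<n. reversal_degree (f k) (f (Suc k)))"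
      by (intro sum_mono degree_cfr_factor)
    finally show "degree (\<Prod>k<n. cfr_factor (f k) (f (Suc k))) \<le> (\<Sum>k<n. reversal_degree (f k) (f (Suc k)))" .
  qed (rule degree_monom_le)
  also have "\<dots> = n * (n - 1) div 2" by (rule path_exponents[OF assms])
  finally show ?thesis .
qed

lemma degree_hpoly: "degree (hpoly n) \<le> n * (n - 1) div 2"
  unfolding hpoly_paths by (rule degree_sum_le[OF finite_motzkin_paths degree_cfr_summand])

lemma cfr_summand_reflect:
  assumes f: "f \<in> motzkin_paths n 0" and x: "x \<noteq> 0" "x \<noteq> -1"
  shows "x ^ (n * (n - 1) div 2) * poly (cfr_summand n f) (inverse x)
       = poly (\<Prod>k<n. step_weight level_weight up_weight down_weight (f k) (f (Suc k))) x"
proof -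
  have steps: "\<And>k. k < n \<Longrightarrow> motzkin_step (f k) (f (Suc k))"
    using f by (auto simp: motzkin_paths_def)
  define e where "e = nat (hexp n f)"
  have "x ^ (n * (n - 1) div 2) = x ^ e * (\<Prod>k<n. x ^ reversal_degree (f k) (f (Suc k)))"
    unfolding path_exponents[OF f, symmetric] e_def by (simp add: power_add power_sum)
  then have "x ^ (n * (n - 1) div 2) * poly (cfr_summand n f) (inverse x)
      = (x ^ e * inverse x ^ e) *
        (\<Prod>k<n. x ^ reversal_degree (f k) (f (Suc k)) * poly (cfr_factor (f k) (f (Suc k))) (inverse x))"
    by (simp add: cfr_summand_def e_def[symmetric] poly_monom poly_prod prod.distrib mult_ac)
  also have "\<dots> = (\<Prod>k<n. poly (step_weight level_weight up_weight down_weight (f k) (f (Suc k))) x)"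
    using x steps by (simp add: cfr_factor_reflect power_mult_distrib[symmetric])
  finally show ?thesis by (simp add: poly_prod)
qed

theorem htpoly_motzkin_sum: "htpoly n = motzkin_sum level_weight up_weight down_weight 0 n"
proof (rule poly_eq_cofinite[of "{0, -1}"])
  fix x :: complex assume "x \<notin> {0, -1}"
  then have x: "x \<noteq> 0" "x \<noteq> -1" by auto
  have "poly (htpoly n) x = x ^ (n * (n - 1) div 2) * poly (hpoly n) (inverse x)"
    unfolding htpoly_def by (rule poly_reversed_coeffs[OF degree_hpoly x(1)])
  also have "\<dots> = (\<Sum>f\<in>motzkin_paths n 0. x ^ (n * (n - 1) div 2) * poly (cfr_summand n f) (inverse x))"
    by (simp add: hpoly_paths poly_sum sum_distrib_left)
  also have "\<dots> = (\<Sum>f\<in>motzkin_paths n 0.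
                    poly (\<Prod>k<n. step_weight level_weight up_weight down_weight (f k) (f (Suc k))) x)"
    by (rule sum.cong[OF refl], rule cfr_summand_reflect) (use x in auto)
  also have "\<dots> = poly (\<Sum>f\<in>motzkin_paths n 0.
                    \<Prod>k<n. step_weight level_weight up_weight down_weight (f k) (f (Suc k))) x"
    by (simp add: poly_sum)
  finally show "poly (htpoly n) x = poly (motzkin_sum level_weight up_weight down_weight 0 n) x"
    by (simp only: motzkin_sum_paths)
qed simp

theorem theorem3p2:
  fixes q :: complex
  shows "(\<lambda>N. jfrac (\<lambda>m. (poly (qbinom (m+1) 1) q)^2)
                     (\<lambda>m. q * (poly (qbinom (m+2) 2) q)^2) 0 N)
           \<longlonglongrightarrow> Abs_fps (\<lambda>n. poly (htpoly n) q)"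
proof -
  let ?g = "\<lambda>m. poly (level_weight m) q"
  let ?u = "\<lambda>m. poly (up_weight m) q"
  let ?d = "\<lambda>m. poly (down_weight m) q"
  have "(\<lambda>m. (poly (qbinom (m+1) 1) q)^2) = ?g"
    by (simp add: level_weight_def)
  moreover have "(\<lambda>m. q * (poly (qbinom (m+2) 2) q)^2) = (\<lambda>m. ?u m * ?d (Suc m))"
    by (simp add: up_weight_def down_weight_def power2_eq_square mult.assoc)
  moreover have "(\<lambda>n. poly (htpoly n) q) = motzkin_sum ?g ?u ?d 0"
    by (simp add: htpoly_motzkin_sum poly_motzkin_sum fun_eq_iff)
  ultimately show ?thesis using jfrac_converges[of ?g ?u ?d] by simp
qed

end
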